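(* Let $\mathcal X=\{1,\dots,J\}$, $\mathcal Y=\{1,\dots,K\}$, and let $\mathcal C_n\subset\mathcal X^n$ be a codebook of $M$ codewords, all of type $p_X$, used over a DMC $P_{\hat Y|X}$. Let $p_{\hat Y|X_1}$ be a conditional type such that $M\,|\mathcal T_{\mathbf x}(p_{\hat Y|X_1})|\ge 2|\mathcal T(p_{\hat Y})|$ for $\mathbf x$ of type $p_X$, where $p_{\hat Y}$ is the $\hat Y$-marginal of $p_X\times p_{\hat Y|X_1}$. Then there exist a codeword $\mathbf x_1\in\mathcal C_n$ and a joint type $p_{\hat YX_1X_2}$ on $\mathcal Y\times\mathcal X\times\mathcal X$ with $p_{\hat YX_1}=p_{\hat YX_2}$ such that $$\Pr\big[\exists\mathbf x_2\in\mathcal C_n\setminus\{\mathbf x_1\}:\ \hat p_{\hat{\mathbf y}\mathbf x_1\mathbf x_2}=p_{\hat YX_1X_2}\big]\ \ge\ \frac{1}{2(n+1)^{J^2K-1}}\Pr\big[\hat{\mathbf y}\in\mathcal T_{\mathbf x_1}(p_{\hat Y|X_1})\big],$$ where both probabilities are with respect to $\hat{\mathbf y}\sim P_{\hat Y|X}^n(\cdot|\mathbf x_1)$.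
   Context: The type of a sequence is its empirical distribution; $\hat p_{\hat{\mathbf y}\mathbf x_1\mathbf x_2}(k,j_1,j_2)=\frac1n|\{i:\hat y_i=k,x_{1,i}=j_1,x_{2,i}=j_2\}|$. The conditional type $\hat p_{\mathbf y|\mathbf x}(k|j)$ is $\hat p_{\mathbf x\mathbf y}(j,k)/\hat p_{\mathbf x}(j)$ if $\hat p_{\mathbf x}(j)>0$ and $1/K$ otherwise; $\mathcal T_{\mathbf x}(p_{\hat Y|X})=\{\hat{\mathbf y}:\hat p_{\hat{\mathbf y}|\mathbf x}=p_{\hat Y|X}\}$ and $\mathcal T(p_{\hat Y})$ is the set of sequences of type $p_{\hat Y}$. $P^n_{\hat Y|X}(\hat{\mathbf y}|\mathbf x)=\prod_i P_{\hat Y|X}(\hat y_i|x_i)$. *)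

theory Defs
  imports Complex_Main
begin

definition seqs :: "nat \<Rightarrow> nat set \<Rightarrow> nat list set" where
  "seqs n A = {xs. length xs = n \<and> set xs \<subseteq> A}"

definition type1 :: "nat list \<Rightarrow> nat \<Rightarrow> real" where
  "type1 x j = real (card {i. i < length x \<and> x ! i = j}) / real (length x)"

definition type2 :: "nat list \<Rightarrow> nat list \<Rightarrow> nat \<Rightarrow> nat \<Rightarrow> real" where
  "type2 x y j k = real (card {i. i < length x \<and> x ! i = j \<and> y ! i = k}) / real (length x)"

definition type3 :: "nat list \<Rightarrow> nat list \<Rightarrow> nat list \<Rightarrow> nat \<Rightarrow> nat \<Rightarrow> nat \<Rightarrow> real" where
  "type3 y x1 x2 k j1 j2 =
     real (card {i. i < length y \<and> y ! i = k \<and> x1 ! i = j1 \<and> x2 ! i = j2}) / real (length y)"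

text \<open>Conditional type of y given x: p(k|j), with the convention 1/K for unseen j.\<close>
definition condtype :: "nat \<Rightarrow> nat list \<Rightarrow> nat list \<Rightarrow> nat \<Rightarrow> nat \<Rightarrow> real" where
  "condtype K y x k j = (if type1 x j > 0 then type2 x y j k / type1 x j else 1 / real K)"

definition cond_typeclass_of :: "nat \<Rightarrow> nat \<Rightarrow> nat list \<Rightarrow> (nat \<Rightarrow> nat \<Rightarrow> real) \<Rightarrow> nat list set" where
  "cond_typeclass_of J K x p =
     {y \<in> seqs (length x) {1..K}. \<forall>k\<in>{1..K}. \<forall>j\<in>{1..J}. condtype K y x k j = p k j}"

definition typeclass_of :: "nat \<Rightarrow> nat \<Rightarrow> (nat \<Rightarrow> real) \<Rightarrow> nat list set" where
  "typeclass_of n K q = {y \<in> seqs n {1..K}. \<forall>k\<in>{1..K}. type1 y k = q k}"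

definition is_cond_type :: "nat \<Rightarrow> nat \<Rightarrow> nat \<Rightarrow> (nat \<Rightarrow> nat \<Rightarrow> real) \<Rightarrow> bool" where
  "is_cond_type n J K p \<longleftrightarrow>
     (\<exists>x\<in>seqs n {1..J}. \<exists>y\<in>seqs n {1..K}. \<forall>k\<in>{1..K}. \<forall>j\<in>{1..J}. condtype K y x k j = p k j)"

definition is_joint_type :: "nat \<Rightarrow> nat \<Rightarrow> nat \<Rightarrow> (nat \<Rightarrow> nat \<Rightarrow> nat \<Rightarrow> real) \<Rightarrow> bool" where
  "is_joint_type n J K p \<longleftrightarrow>
     (\<exists>y\<in>seqs n {1..K}. \<exists>x1\<in>seqs n {1..J}. \<exists>x2\<in>seqs n {1..J}.
        \<forall>k\<in>{1..K}. \<forall>j1\<in>{1..J}. \<forall>j2\<in>{1..J}. type3 y x1 x2 k j1 j2 = p k j1 j2)"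

text \<open>Memoryless channel probability P^n(y|x); W k j = P(k|j).\<close>
definition chan_prob :: "(nat \<Rightarrow> nat \<Rightarrow> real) \<Rightarrow> nat list \<Rightarrow> nat list \<Rightarrow> real" where
  "chan_prob W y x = (\<Prod>i<length x. W (y ! i) (x ! i))"

definition event_prob :: "nat \<Rightarrow> (nat \<Rightarrow> nat \<Rightarrow> real) \<Rightarrow> nat list \<Rightarrow> (nat list \<Rightarrow> bool) \<Rightarrow> real" where
  "event_prob K W x E = (\<Sum>y\<in>{y \<in> seqs (length x) {1..K}. E y}. chan_prob W y x)"

end

theory Submission
  imports Defs "HOL-Library.FuncSet"
begin

text \<open>
  The conditional type class of every codeword lies in the type class \<open>T(p\<^sub>Y)\<close>, and by
  hypothesis the classes of the \<open>M\<close> codewords have in total at least twice as many elements.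
  The parts of the classes not shared with another codeword are disjoint, so some codeword
  \<open>x\<^sub>1\<close> shares at least half of its class. The channel probability given \<open>x\<^sub>1\<close> is constant
  on the class, hence the shared part carries at least half of its probability. Choosing for
  every shared \<open>y\<close> a second codeword \<open>x\<^sub>2\<close> whose class contains \<open>y\<close>, the triples
  \<open>(y, x\<^sub>1, x\<^sub>2)\<close> have at most \<open>(n+1)^(J\<^sup>2K-1)\<close> joint types, and the heaviest one gives
  the bound. Its two \<open>(Y, X)\<close>-marginals agree because \<open>y\<close> has the same conditional type
  given \<open>x\<^sub>1\<close> and given \<open>x\<^sub>2\<close>, and both codewords have type \<open>p\<^sub>X\<close>.
\<close>

section \<open>Counting\<close>

definition overlap :: "'a set \<Rightarrow> ('a \<Rightarrow> 'b set) \<Rightarrow> 'a \<Rightarrow> 'b set" where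
  "overlap C T x = {y \<in> T x. \<exists>x'\<in>C - {x}. y \<in> T x'}"

lemma exists_overlap_card_ge_half:
  assumes "finite U" and "finite C" and "C \<noteq> {}" and "\<forall>x\<in>C. T x \<subseteq> U"
    and "2 * card U \<le> (\<Sum>x\<in>C. card (T x))"
  shows "\<exists>x\<in>C. card (T x) \<le> 2 * card (overlap C T x)"
proof (rule ccontr)
  assume "\<not> ?thesis"
  then have less: "(\<Sum>x\<in>C. 2 * card (overlap C T x)) < (\<Sum>x\<in>C. card (T x))"
    using assms(2,3) by (intro sum_strict_mono) auto
  have finite_T: "finite (T x)" if "x \<in> C" for x
    using assms(1,4) that finite_subset by blast
  have split: "card (T x) = card (T x - overlap C T x) + card (overlap C T x)" if "x \<in> C" for x
  proof -
    have "overlap C T x \<subseteq> T x"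
      unfolding overlap_def by blast
    then show ?thesis
      using finite_T[OF that] by (simp add: card_Diff_subset card_mono finite_subset)
  qed
  have "(\<Sum>x\<in>C. card (T x - overlap C T x)) = card (\<Union>x\<in>C. T x - overlap C T x)"
    using assms(2) finite_T by (intro card_UN_disjoint[symmetric]) (auto simp: overlap_def)
  also have "\<dots> \<le> card U"
    using assms(1,4) by (intro card_mono) auto
  finally have "(\<Sum>x\<in>C. card (T x)) \<le> card U + (\<Sum>x\<in>C. card (overlap C T x))"
    using split by (simp add: sum.distrib)
  moreover have "(\<Sum>x\<in>C. 2 * card (overlap C T x)) = 2 * (\<Sum>x\<in>C. card (overlap C T x))"
    by (simp add: sum_distrib_left)
  ultimately show False
    using less assms(5) by linarith
qed

lemma sum_le_mult_sum_if_constant: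
  fixes f :: "'a \<Rightarrow> real"
  assumes "finite T" and "S \<subseteq> T" and "\<forall>y\<in>T. \<forall>y'\<in>T. f y = f y'" and "\<forall>y\<in>T. 0 \<le> f y"
    and "real (card T) \<le> r * real (card S)"
  shows "sum f T \<le> r * sum f S"
proof (cases "T = {}")
  case False
  then obtain y0 where y0: "y0 \<in> T"
    by blast
  have "sum f T = sum (\<lambda>_. f y0) T"
    by (rule sum.cong[OF refl]) (use assms(3) y0 in blast)
  also have "\<dots> = real (card T) * f y0"
    by simp
  also have "\<dots> \<le> r * real (card S) * f y0"
    by (rule mult_right_mono) (use assms(4,5) y0 in auto)
  also have "\<dots> = r * sum (\<lambda>_. f y0) S"
    by simp
  also have "sum (\<lambda>_. f y0) S = sum f S"
    by (rule sum.cong[OF refl]) (use assms(2,3) y0 in blast)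
  finally show ?thesis .
qed (use assms(2) in simp)

lemma exists_heavy_fibre:
  fixes f :: "'a \<Rightarrow> real"
  assumes "finite S" and "S \<noteq> {}" and "card (g ` S) \<le> N" and "\<forall>y\<in>S. 0 \<le> f y"
  shows "\<exists>y0\<in>S. sum f S \<le> real N * sum f {y \<in> S. g y = g y0}"
proof -
  define w where "w v = sum f {y \<in> S. g y = v}" for v
  have "Max (w ` g ` S) \<in> w ` g ` S"
    using assms(1,2) by (intro Max_in) auto
  then obtain y0 where "y0 \<in> S" and max: "Max (w ` g ` S) = w (g y0)"
    by auto
  have "sum f S = sum w (g ` S)"
    unfolding w_def using assms(1) by (intro sum.group[symmetric]) auto
  also have "\<dots> \<le> real (card (g ` S)) * w (g y0)"
    unfolding max[symmetric] using assms(1) by (intro sum_bounded_above) simp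
  also have "\<dots> \<le> real N * w (g y0)"
    using assms(3,4) unfolding w_def by (intro mult_right_mono sum_nonneg) auto
  finally show ?thesis
    unfolding w_def using \<open>y0 \<in> S\<close> by blast
qed

lemma sum_card_fibres:
  assumes "finite I" and "finite A" and "g ` I \<subseteq> A"
  shows "(\<Sum>a\<in>A. card {i \<in> I. g i = a}) = card I"
  using sum.group[OF assms, of "\<lambda>_. 1 :: nat"] by simp

definition count_vectors :: "'a set \<Rightarrow> nat \<Rightarrow> ('a \<Rightarrow> nat) set" where
  "count_vectors B n = {c. (\<forall>v. v \<notin> B \<longrightarrow> c v = 0) \<and> sum c B = n}"

lemma inj_on_restrict_count_vectors:
  assumes "finite B" and "b \<in> B"
  shows "inj_on (\<lambda>c. restrict c (B - {b})) (count_vectors B n)"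
proof (rule inj_onI)
  fix c c'
  assume c: "c \<in> count_vectors B n" and c': "c' \<in> count_vectors B n"
    and eq: "restrict c (B - {b}) = restrict c' (B - {b})"
  have agree: "c v = c' v" if "v \<in> B - {b}" for v
    using eq that by (metis restrict_apply')
  then have "sum c (B - {b}) = sum c' (B - {b})"
    by (rule sum.cong[OF refl])
  with c c' assms have "c b = c' b"
    unfolding count_vectors_def by (simp add: sum.remove)
  show "c = c'"
  proof
    fix v
    show "c v = c' v"
      using agree \<open>c b = c' b\<close> c c' unfolding count_vectors_def by (cases "v \<in> B - {b}") auto
  qed
qed

lemma restrict_count_vectors_subset:
  assumes "finite B"
  shows "(\<lambda>c. restrict c (B - {b})) ` count_vectors B n \<subseteq> (\<Pi>\<^sub>E v\<in>B - {b}. {0..n})"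
proof clarify
  fix c
  assume "c \<in> count_vectors B n"
  then have "c v \<le> n" if "v \<in> B" for v
    using member_le_sum[of v B c] assms that unfolding count_vectors_def by auto
  then show "restrict c (B - {b}) \<in> (\<Pi>\<^sub>E v\<in>B - {b}. {0..n})"
    by auto
qed

lemma finite_count_vectors:
  assumes "finite B" and "B \<noteq> {}"
  shows "finite (count_vectors B n)"
proof -
  obtain b where "b \<in> B"
    using assms(2) by blast
  then show ?thesis
    using finite_imageD[OF finite_subset[OF restrict_count_vectors_subset[OF assms(1)]]
        inj_on_restrict_count_vectors[OF assms(1)]]
    by (simp add: assms(1) finite_PiE)
qed

lemma card_count_vectors_le:
  assumes "finite B" and "B \<noteq> {}"
  shows "card (count_vectors B n) \<le> (n + 1) ^ (card B - 1)"
proof -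
  obtain b where b: "b \<in> B"
    using assms(2) by blast
  have "card (count_vectors B n) = card ((\<lambda>c. restrict c (B - {b})) ` count_vectors B n)"
    using card_image[OF inj_on_restrict_count_vectors[OF assms(1) b]] by simp
  also have "\<dots> \<le> card (\<Pi>\<^sub>E v\<in>B - {b}. {0..n})"
    using assms(1) by (intro card_mono restrict_count_vectors_subset) (simp_all add: finite_PiE)
  also have "\<dots> = (n + 1) ^ (card B - 1)"
    using assms(1) b by (simp add: card_PiE)
  finally show ?thesis .
qed

section \<open>Types\<close>

lemma finite_seqs: "finite A \<Longrightarrow> finite (seqs n A)"
  unfolding seqs_def using finite_lists_length_eq[of A n] by (simp add: conj_commute)

lemma type1_eq_sum_type2:
  assumes "length y = length x" and "set x \<subseteq> A" and "finite A"
  shows "type1 y k = (\<Sum>j\<in>A. type2 x y j k)"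
proof -
  have "(\<Sum>j\<in>A. card {i \<in> {i. i < length x \<and> y ! i = k}. x ! i = j})
      = card {i. i < length x \<and> y ! i = k}"
    using assms(2,3) nth_mem by (intro sum_card_fibres) auto
  then show ?thesis
    unfolding type1_def type2_def assms(1)
    by (simp add: conj_commute conj_left_commute flip: sum_divide_distrib of_nat_sum)
qed

lemma sum_type3_snd:
  assumes "length x1 = length y" and "length x2 = length y" and "set x2 \<subseteq> A" and "finite A"
  shows "(\<Sum>j2\<in>A. type3 y x1 x2 k j j2) = type2 x1 y j k"
proof -
  have "(\<Sum>j2\<in>A. card {i \<in> {i. i < length y \<and> y ! i = k \<and> x1 ! i = j}. x2 ! i = j2})
      = card {i. i < length y \<and> y ! i = k \<and> x1 ! i = j}"
    using assms nth_mem by (intro sum_card_fibres) auto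
  then show ?thesis
    unfolding type3_def type2_def assms(1)
    by (simp add: conj_commute conj_left_commute flip: sum_divide_distrib of_nat_sum)
qed

lemma sum_type3_fst:
  assumes "length x1 = length y" and "length x2 = length y" and "set x1 \<subseteq> A" and "finite A"
  shows "(\<Sum>j1\<in>A. type3 y x1 x2 k j1 j) = type2 x2 y j k"
proof -
  have "(\<Sum>j1\<in>A. card {i \<in> {i. i < length y \<and> y ! i = k \<and> x2 ! i = j}. x1 ! i = j1})
      = card {i. i < length y \<and> y ! i = k \<and> x2 ! i = j}"
    using assms nth_mem by (intro sum_card_fibres) auto
  then show ?thesis
    unfolding type3_def type2_def assms(2)
    by (simp add: conj_commute conj_left_commute flip: sum_divide_distrib of_nat_sum)
qed

text \<open>If \<open>x\<close> avoids \<open>j\<close>, both sides vanish whatever the junk value \<open>1/K\<close> of \<open>condtype\<close>.\<close>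

lemma type2_eq_condtype_mult_type1: "type2 x y j k = condtype K y x k j * type1 x j"
proof (cases "type1 x j > 0")
  case False
  have none: "{i. i < length x \<and> x ! i = j} = {}"
  proof (rule ccontr)
    assume "{i. i < length x \<and> x ! i = j} \<noteq> {}"
    then have "card {i. i < length x \<and> x ! i = j} > 0" and "length x > 0"
      by (auto simp: card_gt_0_iff)
    with False show False
      unfolding type1_def by simp
  qed
  then have "{i. i < length x \<and> x ! i = j \<and> y ! i = k} = {}"
    by blast
  then show ?thesis
    unfolding type2_def type1_def none by simp
qed (simp add: condtype_def)

lemma type3_marginals_eq:
  assumes "x1 \<in> seqs n {1..J}" and "x2 \<in> seqs n {1..J}"
    and "\<forall>j\<in>{1..J}. type1 x1 j = type1 x2 j"
    and "y \<in> cond_typeclass_of J K x1 V" and "y \<in> cond_typeclass_of J K x2 V"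
    and "j \<in> {1..J}" and "k \<in> {1..K}"
  shows "(\<Sum>j2=1..J. type3 y x1 x2 k j j2) = (\<Sum>j1=1..J. type3 y x1 x2 k j1 j)"
proof -
  have lengths: "length x1 = length y" "length x2 = length y"
    and sets: "set x1 \<subseteq> {1..J}" "set x2 \<subseteq> {1..J}"
    using assms(1,2,4) unfolding cond_typeclass_of_def seqs_def by auto
  have "type2 x1 y j k = type2 x2 y j k"
    using assms(3-7) unfolding cond_typeclass_of_def
    by (simp add: type2_eq_condtype_mult_type1[of _ _ _ _ K])
  then show ?thesis
    using sum_type3_snd[OF lengths sets(2)] sum_type3_fst[OF lengths sets(1)] by simp
qed

lemma cond_typeclass_subset_typeclass:
  assumes "x \<in> seqs n {1..J}" and "\<forall>j\<in>{1..J}. type1 x j = pX j"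
  shows "cond_typeclass_of J K x V \<subseteq> typeclass_of n K (\<lambda>k. \<Sum>j=1..J. pX j * V k j)"
proof
  fix y
  assume y: "y \<in> cond_typeclass_of J K x V"
  have "length y = length x" "length x = n" "set x \<subseteq> {1..J}"
    using y assms(1) unfolding cond_typeclass_of_def seqs_def by auto
  then have "type1 y k = (\<Sum>j=1..J. pX j * V k j)" if "k \<in> {1..K}" for k
    using y that assms(2)
    by (simp add: type1_eq_sum_type2[of y x "{1..J}"] type2_eq_condtype_mult_type1[of _ _ _ _ K]
        cond_typeclass_of_def mult.commute)
  with y \<open>length x = n\<close> show "y \<in> typeclass_of n K (\<lambda>k. \<Sum>j=1..J. pX j * V k j)"
    unfolding typeclass_of_def cond_typeclass_of_def by auto
qed

lemma card_type3_image_le: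
  assumes "J \<ge> 1" and "K \<ge> 1"
    and "\<forall>s\<in>S. y s \<in> seqs n {1..K} \<and> x1 s \<in> seqs n {1..J} \<and> x2 s \<in> seqs n {1..J}"
  shows "card ((\<lambda>s. type3 (y s) (x1 s) (x2 s)) ` S) \<le> (n + 1) ^ (J^2 * K - 1)"
proof -
  define B where "B = {1..K} \<times> {1..J} \<times> {1..J}"
  define freq where "freq c = (\<lambda>k j1 j2. real (c (k, j1, j2)) / real n)" for c :: "nat \<times> nat \<times> nat \<Rightarrow> nat"
  have B: "finite B" "B \<noteq> {}" "card B = J^2 * K"
    using assms(1,2) unfolding B_def by (auto simp: power2_eq_square)
  have "type3 (y s) (x1 s) (x2 s) \<in> freq ` count_vectors B n" if "s \<in> S" for s
  proof -
    define g where "g i = (y s ! i, x1 s ! i, x2 s ! i)" for i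
    define c where "c v = card {i \<in> {..<n}. g i = v}" for v
    have lengths: "length (y s) = n" "length (x1 s) = n" "length (x2 s) = n"
      and sets: "set (y s) \<subseteq> {1..K}" "set (x1 s) \<subseteq> {1..J}" "set (x2 s) \<subseteq> {1..J}"
      using assms(3) that unfolding seqs_def by auto
    have entries: "g ` {..<n} \<subseteq> B"
    proof (rule image_subsetI)
      fix i
      assume "i \<in> {..<n}"
      then have "y s ! i \<in> set (y s)" "x1 s ! i \<in> set (x1 s)" "x2 s ! i \<in> set (x2 s)"
        using lengths by simp_all
      then show "g i \<in> B"
        using sets unfolding B_def g_def by blast
    qed
    then have "sum c B = n"
      unfolding c_def using sum_card_fibres[OF _ B(1) entries] by simp
    moreover have "c v = 0" if "v \<notin> B" for v
      using entries that unfolding c_def by auto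
    moreover have "type3 (y s) (x1 s) (x2 s) = freq c"
      unfolding type3_def freq_def c_def g_def lengths(1) by simp
    ultimately show ?thesis
      unfolding count_vectors_def by blast
  qed
  then have "card ((\<lambda>s. type3 (y s) (x1 s) (x2 s)) ` S) \<le> card (freq ` count_vectors B n)"
    using finite_count_vectors[OF B(1,2)] by (intro card_mono) auto
  also have "\<dots> \<le> card (count_vectors B n)"
    using finite_count_vectors[OF B(1,2)] by (rule card_image_le)
  also have "\<dots> \<le> (n + 1) ^ (J^2 * K - 1)"
    using card_count_vectors_le[OF B(1,2)] B(3) by simp
  finally show ?thesis .
qed

section \<open>Channel probabilities\<close>

lemma chan_prob_eq_prod_power:
  assumes "length y = length x" and "set x \<subseteq> A" and "set y \<subseteq> B" and "finite A" and "finite B"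
  shows "chan_prob W y x
    = (\<Prod>(j, k)\<in>A \<times> B. W k j ^ card {i. i < length x \<and> x ! i = j \<and> y ! i = k})"
proof -
  have "(\<lambda>i. (x ! i, y ! i)) ` {..<length x} \<subseteq> A \<times> B"
    using assms(1-3) nth_mem by fastforce
  then have "chan_prob W y x
      = (\<Prod>v\<in>A \<times> B. \<Prod>i\<in>{i. i \<in> {..<length x} \<and> (x ! i, y ! i) = v}. W (y ! i) (x ! i))"
    unfolding chan_prob_def using assms(4,5) by (intro prod.group[symmetric]) auto
  also have "\<dots> = (\<Prod>(j, k)\<in>A \<times> B. W k j ^ card {i. i < length x \<and> x ! i = j \<and> y ! i = k})"
  proof (rule prod.cong[OF refl], clarify)
    fix j k
    have "(\<Prod>i\<in>{i. i \<in> {..<length x} \<and> (x ! i, y ! i) = (j, k)}. W (y ! i) (x ! i))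
        = (\<Prod>i\<in>{i. i < length x \<and> x ! i = j \<and> y ! i = k}. W k j)"
      by (intro prod.cong) auto
    then show "(\<Prod>i\<in>{i. i \<in> {..<length x} \<and> (x ! i, y ! i) = (j, k)}. W (y ! i) (x ! i))
        = W k j ^ card {i. i < length x \<and> x ! i = j \<and> y ! i = k}"
      by simp
  qed
  finally show ?thesis .
qed

lemma chan_prob_cong_type2:
  assumes "length y = length x" and "length y' = length x"
    and "set x \<subseteq> A" and "set y \<subseteq> B" and "set y' \<subseteq> B" and "finite A" and "finite B"
    and "\<forall>j\<in>A. \<forall>k\<in>B. type2 x y j k = type2 x y' j k"
  shows "chan_prob W y x = chan_prob W y' x"
proof (cases "length x = 0")
  case True
  then show ?thesis
    unfolding chan_prob_def by simp
next
  case False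
  then have counts: "card {i. i < length x \<and> x ! i = j \<and> y ! i = k}
      = card {i. i < length x \<and> x ! i = j \<and> y' ! i = k}" if "j \<in> A" "k \<in> B" for j k
    using assms(8) that unfolding type2_def by simp
  have "chan_prob W y x
      = (\<Prod>(j, k)\<in>A \<times> B. W k j ^ card {i. i < length x \<and> x ! i = j \<and> y ! i = k})"
    using assms by (intro chan_prob_eq_prod_power) auto
  also have "\<dots> = (\<Prod>(j, k)\<in>A \<times> B. W k j ^ card {i. i < length x \<and> x ! i = j \<and> y' ! i = k})"
    using counts by (intro prod.cong) auto
  also have "\<dots> = chan_prob W y' x"
    using assms by (intro chan_prob_eq_prod_power[symmetric]) auto
  finally show ?thesis .
qed

lemma chan_prob_eq_on_cond_typeclass:
  assumes "set x \<subseteq> {1..J}"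
    and "y \<in> cond_typeclass_of J K x V" and "y' \<in> cond_typeclass_of J K x V"
  shows "chan_prob W y x = chan_prob W y' x"
proof (rule chan_prob_cong_type2[of y x y' "{1..J}" "{1..K}"])
  show "\<forall>j\<in>{1..J}. \<forall>k\<in>{1..K}. type2 x y j k = type2 x y' j k"
    using assms(2,3) unfolding cond_typeclass_of_def
    by (simp add: type2_eq_condtype_mult_type1[of _ _ _ _ K])
qed (use assms in \<open>auto simp: cond_typeclass_of_def seqs_def\<close>)

lemma chan_prob_nonneg:
  assumes "\<forall>k\<in>B. \<forall>j\<in>A. 0 \<le> W k j" and "length y = length x" and "set x \<subseteq> A" and "set y \<subseteq> B"
  shows "0 \<le> chan_prob W y x"
  unfolding chan_prob_def
proof (intro prod_nonneg)
  fix i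
  assume "i \<in> {..<length x}"
  then have "x ! i \<in> A" and "y ! i \<in> B"
    using assms(2-4) nth_mem by (auto dest: subsetD)
  then show "0 \<le> W (y ! i) (x ! i)"
    using assms(1) by blast
qed

lemma sum_chan_prob_le_event_prob:
  assumes "\<forall>k\<in>{1..K}. \<forall>j\<in>{1..J}. 0 \<le> W k j" and "set x \<subseteq> {1..J}"
    and "S \<subseteq> {y \<in> seqs (length x) {1..K}. E y}"
  shows "(\<Sum>y\<in>S. chan_prob W y x) \<le> event_prob K W x E"
  unfolding event_prob_def
proof (rule sum_mono2)
  show "finite {y \<in> seqs (length x) {1..K}. E y}"
    using finite_seqs[of "{1..K}" "length x"] by simp
  show "0 \<le> chan_prob W y x" if "y \<in> {y \<in> seqs (length x) {1..K}. E y} - S" for y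
    using that assms(1,2) by (intro chan_prob_nonneg[of "{1..K}" "{1..J}"]) (auto simp: seqs_def)
qed (fact assms(3))

section \<open>The covering argument\<close>

lemma exists_codeword_with_heavy_overlap:
  fixes C :: "nat list set"
  assumes W_nonneg: "\<forall>k\<in>{1..K}. \<forall>j\<in>{1..J}. 0 \<le> W k j"
    and C_sub: "C \<subseteq> seqs n {1..J}" and C_ne: "C \<noteq> {}"
    and C_type: "\<forall>x\<in>C. \<forall>j\<in>{1..J}. type1 x j = pX j"
    and many: "\<forall>x\<in>C. 2 * real (card (typeclass_of n K (\<lambda>k. \<Sum>j=1..J. pX j * V k j)))
      \<le> real (card C) * real (card (cond_typeclass_of J K x V))"
  shows "\<exists>x1\<in>C. event_prob K W x1 (\<lambda>y. y \<in> cond_typeclass_of J K x1 V)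
    \<le> 2 * (\<Sum>y\<in>overlap C (\<lambda>x. cond_typeclass_of J K x V) x1. chan_prob W y x1)"
proof -
  define T where "T x = cond_typeclass_of J K x V" for x
  define U where "U = typeclass_of n K (\<lambda>k. \<Sum>j=1..J. pX j * V k j)"
  have finite_C: "finite C"
    using C_sub finite_seqs[of "{1..J}" n] finite_subset by blast
  have finite_U: "finite U"
    unfolding U_def typeclass_of_def using finite_seqs[of "{1..K}" n] by simp
  have T_sub_U: "\<forall>x\<in>C. T x \<subseteq> U"
    unfolding T_def U_def using C_sub C_type cond_typeclass_subset_typeclass by blast
  have "real (card C) * (2 * real (card U)) \<le> real (card C) * (\<Sum>x\<in>C. real (card (T x)))"
    using sum_mono[of C "\<lambda>_. 2 * real (card U)"] many
    unfolding T_def U_def by (simp add: sum_distrib_left)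
  moreover have "0 < real (card C)"
    using finite_C C_ne by (simp add: card_gt_0_iff)
  ultimately have "real (2 * card U) \<le> real (\<Sum>x\<in>C. card (T x))"
    by (simp add: mult_le_cancel_left_pos)
  then have "2 * card U \<le> (\<Sum>x\<in>C. card (T x))"
    by (simp only: of_nat_le_iff)
  then obtain x1 where x1: "x1 \<in> C" and half: "card (T x1) \<le> 2 * card (overlap C T x1)"
    using exists_overlap_card_ge_half[OF finite_U finite_C C_ne T_sub_U] by blast
  have x1_set: "set x1 \<subseteq> {1..J}"
    using x1 C_sub unfolding seqs_def by auto
  have T_seq: "T x1 \<subseteq> seqs (length x1) {1..K}"
    unfolding T_def cond_typeclass_of_def by auto
  have "{y \<in> seqs (length x1) {1..K}. y \<in> T x1} = T x1"
    using T_seq by blast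
  then have "event_prob K W x1 (\<lambda>y. y \<in> T x1) = (\<Sum>y\<in>T x1. chan_prob W y x1)"
    unfolding event_prob_def by simp
  also have "\<dots> \<le> 2 * (\<Sum>y\<in>overlap C T x1. chan_prob W y x1)"
  proof (rule sum_le_mult_sum_if_constant)
    show "finite (T x1)"
      using T_seq finite_seqs[of "{1..K}"] finite_subset by blast
    show "\<forall>y\<in>T x1. \<forall>y'\<in>T x1. chan_prob W y x1 = chan_prob W y' x1"
      unfolding T_def using x1_set chan_prob_eq_on_cond_typeclass by blast
    show "\<forall>y\<in>T x1. 0 \<le> chan_prob W y x1"
      using T_seq W_nonneg x1_set chan_prob_nonneg[of "{1..K}" "{1..J}"]
      unfolding seqs_def by blast
  qed (use half in \<open>auto simp: overlap_def\<close>)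
  finally show ?thesis
    using x1 unfolding T_def by blast
qed

lemma exists_heavy_joint_type:
  assumes "J \<ge> 1" and "K \<ge> 1" and W_nonneg: "\<forall>k\<in>{1..K}. \<forall>j\<in>{1..J}. 0 \<le> W k j"
    and x1: "x1 \<in> seqs n {1..J}" and D: "D \<subseteq> seqs n {1..J}"
    and S: "S \<subseteq> seqs n {1..K}" "S \<noteq> {}" and covered: "\<forall>y\<in>S. \<exists>x2\<in>D. R y x2"
  shows "\<exists>y0\<in>S. \<exists>x0\<in>D. R y0 x0 \<and> (\<Sum>y\<in>S. chan_prob W y x1)
    \<le> real (n + 1) ^ (J^2 * K - 1) * event_prob K W x1 (\<lambda>y. \<exists>x2\<in>D.
         \<forall>k\<in>{1..K}. \<forall>j1\<in>{1..J}. \<forall>j2\<in>{1..J}. type3 y x1 x2 k j1 j2 = type3 y0 x1 x0 k j1 j2)"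
proof -
  from covered obtain sel where sel: "\<forall>y\<in>S. sel y \<in> D \<and> R y (sel y)"
    by metis
  have x1_seq: "length x1 = n" "set x1 \<subseteq> {1..J}"
    using x1 unfolding seqs_def by auto
  have finite_S: "finite S"
    using S(1) finite_seqs[of "{1..K}" n] finite_subset by blast
  have "\<forall>y\<in>S. y \<in> seqs n {1..K} \<and> x1 \<in> seqs n {1..J} \<and> sel y \<in> seqs n {1..J}"
    using S(1) x1 D sel by blast
  then have few_types: "card ((\<lambda>y. type3 y x1 (sel y)) ` S) \<le> (n + 1) ^ (J^2 * K - 1)"
    using card_type3_image_le[of J K S "\<lambda>y. y" n "\<lambda>_. x1" sel] assms(1,2) by simp
  have nonneg: "\<forall>y\<in>S. 0 \<le> chan_prob W y x1"
    using S(1) W_nonneg x1_seq chan_prob_nonneg[of "{1..K}" "{1..J}"] unfolding seqs_def by blast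
  obtain y0 where y0: "y0 \<in> S" and heavy: "(\<Sum>y\<in>S. chan_prob W y x1)
      \<le> real (n + 1) ^ (J^2 * K - 1)
        * (\<Sum>y\<in>{y \<in> S. type3 y x1 (sel y) = type3 y0 x1 (sel y0)}. chan_prob W y x1)"
    using exists_heavy_fibre[OF finite_S S(2) few_types nonneg] unfolding of_nat_power by blast
  let ?E = "\<lambda>y. \<exists>x2\<in>D. \<forall>k\<in>{1..K}. \<forall>j1\<in>{1..J}. \<forall>j2\<in>{1..J}.
    type3 y x1 x2 k j1 j2 = type3 y0 x1 (sel y0) k j1 j2"
  have "{y \<in> S. type3 y x1 (sel y) = type3 y0 x1 (sel y0)} \<subseteq> {y \<in> seqs (length x1) {1..K}. ?E y}"
  proof
    fix y
    assume y: "y \<in> {y \<in> S. type3 y x1 (sel y) = type3 y0 x1 (sel y0)}"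
    then have "sel y \<in> D" and "y \<in> seqs (length x1) {1..K}"
      using S(1) sel x1_seq(1) by auto
    moreover have "type3 y x1 (sel y) k j1 j2 = type3 y0 x1 (sel y0) k j1 j2" for k j1 j2
      using y by simp
    ultimately show "y \<in> {y \<in> seqs (length x1) {1..K}. ?E y}"
      by blast
  qed
  then have "(\<Sum>y\<in>{y \<in> S. type3 y x1 (sel y) = type3 y0 x1 (sel y0)}. chan_prob W y x1)
      \<le> event_prob K W x1 ?E"
    using W_nonneg x1_seq(2) by (intro sum_chan_prob_le_event_prob)
  then have "(\<Sum>y\<in>S. chan_prob W y x1) \<le> real (n + 1) ^ (J^2 * K - 1) * event_prob K W x1 ?E"
    using heavy by (meson mult_left_mono of_nat_0_le_iff zero_le_power order_trans)
  with y0 sel show ?thesis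
    by blast
qed

lemma exists_joint_type_covering_overlap:
  fixes C :: "nat list set" and J K :: nat and V :: "nat \<Rightarrow> nat \<Rightarrow> real"
  defines "T \<equiv> \<lambda>x. cond_typeclass_of J K x V"
  assumes "J \<ge> 1" and "K \<ge> 1" and W_nonneg: "\<forall>k\<in>{1..K}. \<forall>j\<in>{1..J}. 0 \<le> W k j"
    and C_sub: "C \<subseteq> seqs n {1..J}" and C_type: "\<forall>x\<in>C. \<forall>j\<in>{1..J}. type1 x j = pX j"
    and x1: "x1 \<in> C"
  shows "\<exists>p. is_joint_type n J K p
    \<and> (\<forall>k\<in>{1..K}. \<forall>j\<in>{1..J}. (\<Sum>j2=1..J. p k j j2) = (\<Sum>j1=1..J. p k j1 j))
    \<and> (\<Sum>y\<in>overlap C T x1. chan_prob W y x1) \<le> real (n + 1) ^ (J^2 * K - 1) * event_prob K W x1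
        (\<lambda>y. \<exists>x2\<in>C - {x1}. \<forall>k\<in>{1..K}. \<forall>j1\<in>{1..J}. \<forall>j2\<in>{1..J}. type3 y x1 x2 k j1 j2 = p k j1 j2)"
proof -
  have x1_seq: "x1 \<in> seqs n {1..J}" and x1_set: "set x1 \<subseteq> {1..J}"
    using x1 C_sub unfolding seqs_def by auto
  have overlap_seq: "overlap C T x1 \<subseteq> seqs n {1..K}"
    using x1_seq unfolding overlap_def T_def cond_typeclass_of_def seqs_def by auto
  show ?thesis
  proof (cases "overlap C T x1 = {}")
    case True
    define y where "y = replicate n (1::nat)"
    have y_seq: "y \<in> seqs n {1..K}"
      unfolding y_def seqs_def using assms(3) by auto
    show ?thesis
    proof (intro exI conjI ballI)
      show "is_joint_type n J K (type3 y x1 x1)"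
        unfolding is_joint_type_def using y_seq x1_seq by blast
      show "(\<Sum>j2=1..J. type3 y x1 x1 k j j2) = (\<Sum>j1=1..J. type3 y x1 x1 k j1 j)" for k j
        using sum_type3_snd[of x1 y x1] sum_type3_fst[of x1 y x1] x1_seq y_seq x1_set
        unfolding seqs_def by simp
      show "(\<Sum>y\<in>overlap C T x1. chan_prob W y x1) \<le> real (n + 1) ^ (J^2 * K - 1) * event_prob K W x1 E"
        for E
        using True sum_chan_prob_le_event_prob[OF W_nonneg x1_set, of "{}"] by simp
    qed
  next
    case False
    have others_seq: "C - {x1} \<subseteq> seqs n {1..J}"
      using C_sub by blast
    have "\<forall>y\<in>overlap C T x1. \<exists>x2\<in>C - {x1}. y \<in> T x2"
      unfolding overlap_def by blast
    from exists_heavy_joint_type[OF assms(2,3) W_nonneg x1_seq others_seq overlap_seq False this]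
    obtain y0 x0 where y0: "y0 \<in> overlap C T x1" and x0: "x0 \<in> C - {x1}" "y0 \<in> T x0"
      and heavy: "(\<Sum>y\<in>overlap C T x1. chan_prob W y x1) \<le> real (n + 1) ^ (J^2 * K - 1)
        * event_prob K W x1 (\<lambda>y. \<exists>x2\<in>C - {x1}. \<forall>k\<in>{1..K}. \<forall>j1\<in>{1..J}. \<forall>j2\<in>{1..J}.
            type3 y x1 x2 k j1 j2 = type3 y0 x1 x0 k j1 j2)"
      by blast
    have x0_seq: "x0 \<in> seqs n {1..J}"
      using x0 C_sub by blast
    show ?thesis
    proof (intro exI conjI ballI)
      show "is_joint_type n J K (type3 y0 x1 x0)"
        unfolding is_joint_type_def using y0 overlap_seq x1_seq x0_seq by blast
      show "(\<Sum>j2=1..J. type3 y0 x1 x0 k j j2) = (\<Sum>j1=1..J. type3 y0 x1 x0 k j1 j)"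
        if "k \<in> {1..K}" "j \<in> {1..J}" for k j
      proof (rule type3_marginals_eq[OF x1_seq x0_seq _ _ _ that(2,1)])
        show "\<forall>j\<in>{1..J}. type1 x1 j = type1 x0 j"
          using x1 x0(1) C_type by simp
        show "y0 \<in> cond_typeclass_of J K x1 V" "y0 \<in> cond_typeclass_of J K x0 V"
          using y0 x0(2) unfolding overlap_def T_def by auto
      qed
    qed (fact heavy)
  qed
qed

theorem lemma2:
  fixes n J K M :: nat
    and C :: "nat list set"
    and W :: "nat \<Rightarrow> nat \<Rightarrow> real"
    and pX :: "nat \<Rightarrow> real"
    and pYX1 :: "nat \<Rightarrow> nat \<Rightarrow> real"
  assumes J: "J \<ge> 1" and K: "K \<ge> 1"
    and W_nonneg: "\<forall>k\<in>{1..K}. \<forall>j\<in>{1..J}. W k j \<ge> 0"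
    and W_sum: "\<forall>j\<in>{1..J}. (\<Sum>k=1..K. W k j) = 1"
    and C_sub: "C \<subseteq> seqs n {1..J}"
    and C_ne: "C \<noteq> {}"
    and C_card: "card C = M"
    and C_type: "\<forall>x\<in>C. \<forall>j\<in>{1..J}. type1 x j = pX j"
    and p_cond: "is_cond_type n J K pYX1"
    and big: "\<forall>x\<in>seqs n {1..J}. (\<forall>j\<in>{1..J}. type1 x j = pX j) \<longrightarrow>
        real M * real (card (cond_typeclass_of J K x pYX1))
          \<ge> 2 * real (card (typeclass_of n K (\<lambda>k. \<Sum>j=1..J. pX j * pYX1 k j)))"
  shows "\<exists>x1\<in>C. \<exists>p :: nat \<Rightarrow> nat \<Rightarrow> nat \<Rightarrow> real.
           is_joint_type n J K p
         \<and> (\<forall>k\<in>{1..K}. \<forall>j\<in>{1..J}. (\<Sum>j2=1..J. p k j j2) = (\<Sum>j1=1..J. p k j1 j))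
         \<and> event_prob K W x1
             (\<lambda>y. \<exists>x2\<in>C - {x1}. \<forall>k\<in>{1..K}. \<forall>j1\<in>{1..J}. \<forall>j2\<in>{1..J}.
                    type3 y x1 x2 k j1 j2 = p k j1 j2)
           \<ge> 1 / (2 * real (n + 1) ^ (J^2 * K - 1))
              * event_prob K W x1 (\<lambda>y. y \<in> cond_typeclass_of J K x1 pYX1)"
proof -
  define T where "T x = cond_typeclass_of J K x pYX1" for x
  define N where "N = real (n + 1) ^ (J^2 * K - 1)"
  have "\<forall>x\<in>C. 2 * real (card (typeclass_of n K (\<lambda>k. \<Sum>j=1..J. pX j * pYX1 k j)))
      \<le> real (card C) * real (card (T x))"
    using big C_sub C_type unfolding C_card T_def by blast
  then obtain x1 where x1: "x1 \<in> C"
    and half: "event_prob K W x1 (\<lambda>y. y \<in> T x1) \<le> 2 * (\<Sum>y\<in>overlap C T x1. chan_prob W y x1)"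
    using exists_codeword_with_heavy_overlap[OF W_nonneg C_sub C_ne C_type]
    unfolding T_def by blast
  obtain p where joint: "is_joint_type n J K p"
    and marginals: "\<forall>k\<in>{1..K}. \<forall>j\<in>{1..J}. (\<Sum>j2=1..J. p k j j2) = (\<Sum>j1=1..J. p k j1 j)"
    and heavy: "(\<Sum>y\<in>overlap C T x1. chan_prob W y x1) \<le> N * event_prob K W x1
      (\<lambda>y. \<exists>x2\<in>C - {x1}. \<forall>k\<in>{1..K}. \<forall>j1\<in>{1..J}. \<forall>j2\<in>{1..J}. type3 y x1 x2 k j1 j2 = p k j1 j2)"
      (is "_ \<le> N * ?e")
    using exists_joint_type_covering_overlap[OF J K W_nonneg C_sub C_type x1, of pYX1]
    unfolding T_def N_def by blast
  have "N > 0"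
    unfolding N_def by simp
  have "1 / (2 * N) * event_prob K W x1 (\<lambda>y. y \<in> T x1) \<le> 1 / (2 * N) * (2 * N * ?e)"
    using half heavy \<open>N > 0\<close> by (intro mult_left_mono) auto
  also have "\<dots> = ?e"
    using \<open>N > 0\<close> by simp
  finally show ?thesis
    using x1 joint marginals unfolding N_def T_def by blast
qed

end
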